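(* Let $h_0>0$, $U>2h_0$, $|h|\le h_0$, and let $e,e'\in\mathscr B_\Lambda$ be distinct nearest-neighbour bonds. Then \[ P\Bigl(\mathrm{ad}_{\mathcal I_h((T_e)^{\rm off})}\bigl((T_{e'})^{\rm off}\bigr)\Bigr)^{\rm diag}P=0 . \]
   Context: $\Lambda=(\mathbb Z/L\mathbb Z)^d$, $L\in2\mathbb N$, $\mathscr B_\Lambda$ its unordered nearest-neighbour bonds. Fermionic Fock space over $\ell^2(\Lambda)\otimes\mathbb C^2$ with CAR operators $c_{x\sigma}$, $n_{x\sigma}=c^*_{x\sigma}c_{x\sigma}$, $n_x=n_{x\uparrow}+n_{x\downarrow}$; $\mathcal H^{\rm hf}_\Lambda=\ker(\sum_xn_x-|\Lambda|)$; $D_\Lambda=\sum_xn_{x\uparrow}n_{x\downarrow}$; $\eta_x=(-1)^{x_1+\dots+x_d}$; $M_\Lambda=\sum_x\eta_x\frac12(n_{x\uparrow}-n_{x\downarrow})$. All operators act on $\mathcal H^{\rm hf}_\Lambda$. $P$ is the projection onto $\ker D_\Lambda$ in $\mathcal H^{\rm hf}_\Lambda$ (singly occupied configurations). $P_m$ is the spectral projection of $D_\Lambda$ at eigenvalue $m$; $B^{(k)}=\sum_mP_{m+k}BP_m$, $B^{\rm diag}=B^{(0)}$, $B^{\rm off}=\sum_{k\ne0}B^{(k)}$. For $e=\{x,y\}$, $T_e=-t\sum_\sigma(c^*_{x\sigma}c_{y\sigma}+c^*_{y\sigma}c_{x\sigma})$ ($t\in\mathbb R$). For an operator $A$ supported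 on $X$ of grade $k\ne0$, $\mathcal I_h(A)=\frac1{kU}\sum_{n\ge0}(\frac h{kU})^n\mathrm{ad}^{\,n}_{M_\Lambda}(A)$ with $\mathrm{ad}_S(A)=[S,A]$, and $\mathcal I_h(T_e^{\rm off}):=\sum_{k\ne0}\mathcal I_h((T_e)^{(k)})$. *)

theory Defs
  imports Complex_Main
begin

text \<open>Operators on the fermionic Fock space are represented by their matrices
  in the occupation-number basis: a basis vector is a finite set S of occupied
  modes, and an operator A is the function (S, S') giving the matrix entry
  between S (row) and S' (column).\<close>

type_synonym op = "nat set \<Rightarrow> nat set \<Rightarrow> complex"

text \<open>Lattice Lambda = (Z/LZ)^d: sites are encoded as numbers x < L^d, the i-th
  coordinate being the i-th base-L digit.\<close>

definition sites :: "nat \<Rightarrow> nat \<Rightarrow> nat set" where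
  "sites d L = {..<L ^ d}"

definition coord :: "nat \<Rightarrow> nat \<Rightarrow> nat \<Rightarrow> nat" where
  "coord L x i = (x div L ^ i) mod L"

definition nn :: "nat \<Rightarrow> nat \<Rightarrow> nat \<Rightarrow> nat \<Rightarrow> bool" where
  "nn d L x y \<longleftrightarrow> x \<in> sites d L \<and> y \<in> sites d L \<and> x \<noteq> y \<and>
     (\<exists>i<d. (coord L y i = (coord L x i + 1) mod L \<or> coord L x i = (coord L y i + 1) mod L)
            \<and> (\<forall>j<d. j \<noteq> i \<longrightarrow> coord L y j = coord L x j))"

definition bonds :: "nat \<Rightarrow> nat \<Rightarrow> nat set set" where
  "bonds d L = {{x, y} | x y. nn d L x y}"

definition eta :: "nat \<Rightarrow> nat \<Rightarrow> nat \<Rightarrow> real" where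
  "eta d L x = (-1) ^ (\<Sum>i<d. coord L x i)"

text \<open>Modes (x, sigma): spin up = True. Encoded as natural numbers; this
  encoding fixes the ordering used in the Jordan-Wigner signs.\<close>
definition mode :: "nat \<Rightarrow> bool \<Rightarrow> nat" where
  "mode x \<sigma> = 2 * x + (if \<sigma> then 0 else 1)"

definition fock :: "nat \<Rightarrow> nat \<Rightarrow> nat set set" where
  "fock d L = Pow {..<2 * L ^ d}"

definition hf :: "nat \<Rightarrow> nat \<Rightarrow> nat set set" where
  "hf d L = {S \<in> fock d L. card S = L ^ d}"

definition mmult :: "nat set set \<Rightarrow> op \<Rightarrow> op \<Rightarrow> op" where
  "mmult B A C = (\<lambda>S S'. \<Sum>R\<in>B. A S R * C R S')"

text \<open>Annihilation and creation operators (CAR, Jordan-Wigner sign).\<close>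
definition ann :: "nat \<Rightarrow> op" where
  "ann m = (\<lambda>S S'. if m \<in> S' \<and> S = S' - {m} then (-1) ^ card {k\<in>S'. k < m} else 0)"

definition cre :: "nat \<Rightarrow> op" where
  "cre m = (\<lambda>S S'. cnj (ann m S' S))"

definition num :: "nat \<Rightarrow> nat \<Rightarrow> nat \<Rightarrow> op" where
  "num d L m = mmult (fock d L) (cre m) (ann m)"

definition Dop :: "nat \<Rightarrow> nat \<Rightarrow> op" where
  "Dop d L = (\<lambda>S S'. \<Sum>x\<in>sites d L.
      mmult (fock d L) (num d L (mode x True)) (num d L (mode x False)) S S')"

definition Mop :: "nat \<Rightarrow> nat \<Rightarrow> op" where
  "Mop d L = (\<lambda>S S'. \<Sum>x\<in>sites d L. of_real (eta d L x) * (1/2) *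
      (num d L (mode x True) S S' - num d L (mode x False) S S'))"

text \<open>Spectral projection of D at eigenvalue m (D is diagonal in the
  occupation basis).  P = Pm d L 0 is the projection onto ker D.\<close>
definition Pm :: "nat \<Rightarrow> nat \<Rightarrow> int \<Rightarrow> op" where
  "Pm d L m = (\<lambda>S S'. if S = S' \<and> Dop d L S S = of_int m then 1 else 0)"

text \<open>B^(k) = sum_m P_(m+k) B P_m; the spectrum of D lies in {0..|Lambda|}.\<close>
definition grade :: "nat \<Rightarrow> nat \<Rightarrow> int \<Rightarrow> op \<Rightarrow> op" where
  "grade d L k B = (\<lambda>S S'. \<Sum>m\<in>{0..int (L ^ d)}.
      mmult (fock d L) (mmult (fock d L) (Pm d L (m + k)) B) (Pm d L m) S S')"

definition offp :: "nat \<Rightarrow> nat \<Rightarrow> op \<Rightarrow> op" where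
  "offp d L B = (\<lambda>S S'. \<Sum>k\<in>{- int (L ^ d)..int (L ^ d)} - {0}. grade d L k B S S')"

definition ad :: "nat \<Rightarrow> nat \<Rightarrow> op \<Rightarrow> op \<Rightarrow> op" where
  "ad d L A B = (\<lambda>S S'. mmult (fock d L) A B S S' - mmult (fock d L) B A S S')"

text \<open>Hopping on a bond e: T_e = -t sum_sigma (c*_x c_y + c*_y c_x), written as
  a sum over the two ordered pairs of distinct endpoints.\<close>
definition Tb :: "nat \<Rightarrow> nat \<Rightarrow> real \<Rightarrow> nat set \<Rightarrow> op" where
  "Tb d L t e = (\<lambda>S S'. - of_real t * (\<Sum>\<sigma>\<in>(UNIV::bool set).
      \<Sum>(a, b)\<in>{(a, b). a \<in> e \<and> b \<in> e \<and> a \<noteq> b}.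
        mmult (fock d L) (cre (mode a \<sigma>)) (ann (mode b \<sigma>)) S S'))"

text \<open>I_h(A) for A of grade k (the series taken entrywise).\<close>
definition Ik :: "nat \<Rightarrow> nat \<Rightarrow> real \<Rightarrow> real \<Rightarrow> int \<Rightarrow> op \<Rightarrow> op" where
  "Ik d L h U k A = (\<lambda>S S'. (1 / (of_int k * of_real U)) *
      (\<Sum>n. (of_real h / (of_int k * of_real U)) ^ n * ((ad d L (Mop d L)) ^^ n) A S S'))"

text \<open>I_h(B^off) := sum over k /= 0 of I_h(B^(k)) (only |k| <= |Lambda| can be nonzero).\<close>
definition Ioff :: "nat \<Rightarrow> nat \<Rightarrow> real \<Rightarrow> real \<Rightarrow> op \<Rightarrow> op" where
  "Ioff d L h U B = (\<lambda>S S'. \<Sum>k\<in>{- int (L ^ d)..int (L ^ d)} - {0}.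
      Ik d L h U k (grade d L k B) S S')"

end

theory Submission
  imports Defs
begin

(* The support of a matrix product lies in the relational composition of the supports, and
   the projections P_m and M_Lambda are diagonal.  Hence grading, taking the off-diagonal part,
   applying I_h and commuting never enlarge supports, and a nonzero matrix element of the
   operator between singly occupied states S, S' requires a path S -> R -> S' consisting of a
   hop along one of the bonds e, e' followed by a hop along the other.  The first hop leaves one
   endpoint of its bond empty and the other doubly occupied, so the second hop can only restore
   single occupancy by moving an electron back across the same bond, forcing e = e'. *)

definition supp :: "op \<Rightarrow> nat set rel" where
  "supp A = {(S, S'). A S S' \<noteq> 0}"

lemma supp_mmult: "supp (mmult B X Y) \<subseteq> supp X O supp Y"
proof
  fix p assume "p \<in> supp (mmult B X Y)"
  then obtain S S' where p: "p = (S, S')" and "(\<Sum>R\<in>B. X S R * Y R S') \<noteq> 0"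
    unfolding supp_def mmult_def by blast
  then obtain R where "X S R * Y R S' \<noteq> 0"
    by (meson sum.not_neutral_contains_not_neutral)
  then show "p \<in> supp X O supp Y"
    unfolding p supp_def by auto
qed

lemma supp_sum: "supp (\<lambda>S S'. \<Sum>k\<in>K. A k S S') \<subseteq> (\<Union>k\<in>K. supp (A k))"
  unfolding supp_def by (auto dest: sum.not_neutral_contains_not_neutral)

lemma supp_ad: "supp (ad d L X Y) \<subseteq> supp X O supp Y \<union> supp Y O supp X"
proof -
  have "supp (ad d L X Y) \<subseteq> supp (mmult (fock d L) X Y) \<union> supp (mmult (fock d L) Y X)"
    unfolding supp_def ad_def by auto
  then show ?thesis
    using supp_mmult by blast
qed

lemma supp_mmult_diagonal_left: "supp X \<subseteq> Id \<Longrightarrow> supp (mmult B X Y) \<subseteq> supp Y"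
  using supp_mmult by blast

lemma supp_mmult_diagonal_right: "supp Y \<subseteq> Id \<Longrightarrow> supp (mmult B X Y) \<subseteq> supp X"
  using supp_mmult by blast

lemma supp_ad_diagonal: "supp M \<subseteq> Id \<Longrightarrow> supp (ad d L M A) \<subseteq> supp A"
  using supp_ad by blast

lemma supp_ad_power_diagonal: "supp M \<subseteq> Id \<Longrightarrow> supp ((ad d L M ^^ n) A) \<subseteq> supp A"
  by (induction n) (use supp_ad_diagonal in fastforce)+

lemma supp_ann: "supp (ann m) = {(S - {m}, S) | S. m \<in> S}"
  unfolding supp_def ann_def by auto

lemma supp_cre: "supp (cre m) = {(S, S - {m}) | S. m \<in> S}"
  unfolding supp_def cre_def ann_def by auto

lemma supp_cre_ann: "supp (mmult B (cre m) (ann m')) \<subseteq>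
    {(insert m Q, insert m' Q) | Q. m \<notin> Q \<and> m' \<notin> Q}"
proof
  fix p assume "p \<in> supp (mmult B (cre m) (ann m'))"
  then obtain S S' where "p = (S, S')" "m \<in> S" "m' \<in> S'" "S - {m} = S' - {m'}"
    using supp_mmult[of B "cre m" "ann m'"] unfolding supp_cre supp_ann by blast
  then show "p \<in> {(insert m Q, insert m' Q) | Q. m \<notin> Q \<and> m' \<notin> Q}"
  proof (intro CollectI exI conjI)
    show "p = (insert m (S - {m}), insert m' (S - {m}))"
      using \<open>p = (S, S')\<close> \<open>m \<in> S\<close> \<open>m' \<in> S'\<close> \<open>S - {m} = S' - {m'}\<close>
      by (metis insert_Diff)
  qed (use \<open>S - {m} = S' - {m'}\<close> in auto)
qed

lemma supp_num: "supp (num d L m) \<subseteq> Id"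
  unfolding num_def using supp_mmult[of _ "cre m" "ann m"] by (auto simp: supp_cre supp_ann)

lemma supp_Mop: "supp (Mop d L) \<subseteq> Id"
proof -
  have "supp (Mop d L) \<subseteq> (\<Union>x\<in>sites d L. supp (num d L (mode x True)) \<union> supp (num d L (mode x False)))"
    unfolding Mop_def supp_def by (fastforce dest: sum.not_neutral_contains_not_neutral)
  then show ?thesis
    using supp_num by blast
qed

lemma supp_Pm: "supp (Pm d L m) \<subseteq> {(S, S) | S. Dop d L S S = of_int m}"
  unfolding supp_def Pm_def by auto

lemma supp_Pm_diagonal: "supp (Pm d L m) \<subseteq> Id"
  using supp_Pm by blast

lemma supp_Pm_sandwich:
  "supp (mmult B (mmult B (Pm d L m) X) (Pm d L m')) \<subseteq>
     {(S, S') \<in> supp X. Dop d L S S = of_int m \<and> Dop d L S' S' = of_int m'}"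
  using supp_mmult[of B "mmult B (Pm d L m) X" "Pm d L m'"] supp_mmult[of B "Pm d L m" X]
    supp_Pm[of d L m] supp_Pm[of d L m']
  by blast

lemma supp_grade: "supp (grade d L k B) \<subseteq> supp B"
proof -
  have "supp (mmult (fock d L) (mmult (fock d L) (Pm d L (m + k)) B) (Pm d L m)) \<subseteq> supp B" for m
    by (meson order.trans supp_Pm_diagonal supp_mmult_diagonal_left supp_mmult_diagonal_right)
  then show ?thesis
    unfolding grade_def using supp_sum by fast
qed

lemma supp_offp: "supp (offp d L B) \<subseteq> supp B"
  unfolding offp_def using supp_sum supp_grade by fast

lemma supp_Ik: "supp (Ik d L h U k A) \<subseteq> supp A"
proof
  fix p assume "p \<in> supp (Ik d L h U k A)"
  then obtain S S' where p: "p = (S, S')" and "Ik d L h U k A S S' \<noteq> 0"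
    unfolding supp_def by blast
  then obtain n where "((ad d L (Mop d L)) ^^ n) A S S' \<noteq> 0"
    unfolding Ik_def by force
  then show "p \<in> supp A"
    using supp_ad_power_diagonal[OF supp_Mop] unfolding p supp_def by blast
qed

lemma supp_Ioff: "supp (Ioff d L h U B) \<subseteq> supp B"
  unfolding Ioff_def using supp_sum supp_Ik supp_grade by fast

lemma supp_ad_Ioff_offp:
  "supp (ad d L (Ioff d L h U A) (offp d L B)) \<subseteq> supp A O supp B \<union> supp B O supp A"
  using supp_ad[of d L "Ioff d L h U A" "offp d L B"] supp_Ioff[of d L h U A] supp_offp[of d L B]
  by blast

definition hops :: "nat set \<Rightarrow> nat set rel" where
  "hops e = {(insert (mode a \<sigma>) Q, insert (mode b \<sigma>) Q) | a b \<sigma> Q.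
     a \<in> e \<and> b \<in> e \<and> a \<noteq> b \<and> mode a \<sigma> \<notin> Q \<and> mode b \<sigma> \<notin> Q}"

lemma supp_Tb: "supp (Tb d L t e) \<subseteq> hops e"
proof
  fix p assume "p \<in> supp (Tb d L t e)"
  then obtain S S' where p: "p = (S, S')" and "Tb d L t e S S' \<noteq> 0"
    unfolding supp_def by blast
  then obtain \<sigma> where "(\<Sum>(a, b)\<in>{(a, b). a \<in> e \<and> b \<in> e \<and> a \<noteq> b}.
      mmult (fock d L) (cre (mode a \<sigma>)) (ann (mode b \<sigma>)) S S') \<noteq> 0"
    unfolding Tb_def by (metis (no_types, lifting) mult_zero_right sum.neutral)
  then obtain q where "q \<in> {(a, b). a \<in> e \<and> b \<in> e \<and> a \<noteq> b}"
    and "(case q of (a, b) \<Rightarrow> mmult (fock d L) (cre (mode a \<sigma>)) (ann (mode b \<sigma>)) S S') \<noteq> 0"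
    by (meson sum.not_neutral_contains_not_neutral)
  then obtain a b where ab: "a \<in> e" "b \<in> e" "a \<noteq> b"
    and "(S, S') \<in> supp (mmult (fock d L) (cre (mode a \<sigma>)) (ann (mode b \<sigma>)))"
    unfolding supp_def by auto
  then obtain Q where Q: "p = (insert (mode a \<sigma>) Q, insert (mode b \<sigma>) Q)"
    "mode a \<sigma> \<notin> Q" "mode b \<sigma> \<notin> Q"
    using supp_cre_ann[of "fock d L" "mode a \<sigma>" "mode b \<sigma>"] p by blast
  show "p \<in> hops e"
    unfolding hops_def using ab Q by (intro CollectI exI[of _ a] exI[of _ b] exI[of _ \<sigma>] exI[of _ Q]) simp
qed

definition singly_occupied :: "nat \<Rightarrow> nat set \<Rightarrow> bool" where
  "singly_occupied N S \<longleftrightarrow> (\<forall>x<N. \<exists>!\<sigma>. mode x \<sigma> \<in> S)"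

lemma mode_eq_iff [simp]: "mode x \<sigma> = mode y \<tau> \<longleftrightarrow> x = y \<and> \<sigma> = \<tau>"
  unfolding mode_def by (cases \<sigma>; cases \<tau>) presburger+

lemma mode_div_2_even: "mode (m div 2) (even m) = m"
  unfolding mode_def by simp

lemma num_entry:
  assumes "S \<in> fock d L"
  shows "num d L m S R = (if m \<in> S \<and> R = S then 1 else 0)"
proof (cases "m \<in> S \<and> R = S")
  case True
  have "num d L m S R = (\<Sum>Q\<in>fock d L. if Q = S - {m} then 1 else 0)"
    unfolding num_def mmult_def
  proof (rule sum.cong[OF refl])
    fix Q
    show "cre m S Q * ann m Q R = (if Q = S - {m} then 1 else 0)"
      using True unfolding cre_def ann_def
      by (auto simp flip: power_add simp: mult_2[symmetric] power_mult)
  qed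
  also have "\<dots> = 1"
    using assms unfolding fock_def by auto
  finally show ?thesis
    using True by simp
next
  case False
  have "num d L m S R = 0"
    unfolding num_def mmult_def
    by (rule sum.neutral) (use False in \<open>auto simp: cre_def ann_def\<close>)
  then show ?thesis
    using False by simp
qed

lemma Dop_diagonal_entry:
  assumes "S \<in> fock d L"
  shows "Dop d L S S = of_nat (card {x \<in> sites d L. mode x True \<in> S \<and> mode x False \<in> S})"
proof -
  have "mmult (fock d L) (num d L (mode x True)) (num d L (mode x False)) S S
      = of_bool (mode x True \<in> S \<and> mode x False \<in> S)" for x
  proof -
    have "mmult (fock d L) (num d L (mode x True)) (num d L (mode x False)) S S
        = (\<Sum>R\<in>fock d L. if R = S then of_bool (mode x True \<in> S \<and> mode x False \<in> S) else 0)"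
      unfolding mmult_def by (rule sum.cong) (auto simp: num_entry assms)
    then show ?thesis
      using assms by (simp add: fock_def)
  qed
  then show ?thesis
    unfolding Dop_def by (simp add: sites_def Int_def)
qed

lemma singly_occupied_if_no_double_occupancy:
  assumes "S \<subseteq> {..<2 * N}" "card S = N"
    and no_double: "\<And>x. x < N \<Longrightarrow> \<not> (mode x True \<in> S \<and> mode x False \<in> S)"
  shows "singly_occupied N S"
proof -
  have "inj_on (\<lambda>m. m div 2) S"
  proof (rule inj_onI)
    fix m m' assume "m \<in> S" "m' \<in> S" "m div 2 = m' div 2"
    have "m div 2 < N"
      using \<open>m \<in> S\<close> assms(1) by auto
    have modes: "m = mode (m div 2) (even m)" "m' = mode (m div 2) (even m')"
      using mode_div_2_even \<open>m div 2 = m' div 2\<close> by metis+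
    have "even m = even m'"
    proof (rule ccontr)
      assume "even m \<noteq> even m'"
      then have "mode (m div 2) True \<in> S \<and> mode (m div 2) False \<in> S"
        using modes \<open>m \<in> S\<close> \<open>m' \<in> S\<close> by (cases "even m") auto
      then show False
        using no_double \<open>m div 2 < N\<close> by blast
    qed
    then show "m = m'"
      using modes by simp
  qed
  moreover have "(\<lambda>m. m div 2) ` S \<subseteq> {..<N}"
    using assms(1) by auto
  ultimately have "(\<lambda>m. m div 2) ` S = {..<N}"
    using assms(2) by (metis card_image card_lessThan card_subset_eq finite_lessThan)
  then have "\<exists>\<sigma>. mode x \<sigma> \<in> S" if "x < N" for x
  proof -
    obtain m where "m \<in> S" "x = m div 2"
      using \<open>x < N\<close> \<open>(\<lambda>m. m div 2) ` S = {..<N}\<close> by blast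
    then show ?thesis
      using mode_div_2_even by metis
  qed
  then show ?thesis
    using no_double unfolding singly_occupied_def by (metis (full_types))
qed

lemma singly_occupied_if_Dop_eq_0:
  assumes "S \<in> hf d L" "Dop d L S S = 0"
  shows "singly_occupied (L ^ d) S"
proof (rule singly_occupied_if_no_double_occupancy)
  show "S \<subseteq> {..<2 * L ^ d}" "card S = L ^ d"
    using assms(1) unfolding hf_def fock_def by auto
  have "card {x \<in> sites d L. mode x True \<in> S \<and> mode x False \<in> S} = 0"
    using assms Dop_diagonal_entry[of S d L] unfolding hf_def by simp
  then show "\<not> (mode x True \<in> S \<and> mode x False \<in> S)" if "x < L ^ d" for x
    using that by (simp add: sites_def)
qed

lemma hop_from_singly_occupied:
  assumes S: "singly_occupied N S" and "e \<subseteq> {..<N}" and "(S, R) \<in> hops e"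
  obtains a b where "a \<in> e" "b \<in> e" "a \<noteq> b" "\<And>\<rho>. mode a \<rho> \<notin> R" "\<And>\<rho>. mode b \<rho> \<in> R"
proof -
  obtain a b \<tau> Q where hop: "S = insert (mode a \<tau>) Q" "R = insert (mode b \<tau>) Q"
    "a \<in> e" "b \<in> e" "a \<noteq> b" "mode a \<tau> \<notin> Q" "mode b \<tau> \<notin> Q"
    using \<open>(S, R) \<in> hops e\<close> unfolding hops_def by blast
  have "a < N" "b < N"
    using hop \<open>e \<subseteq> {..<N}\<close> by auto
  have a_empty: "mode a \<rho> \<notin> R" for \<rho>
    using S \<open>a < N\<close> hop unfolding singly_occupied_def by auto
  have b_double: "mode b \<rho> \<in> R" for \<rho>
  proof -
    obtain \<rho>\<^sub>0 where "mode b \<rho>\<^sub>0 \<in> S"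
      using S \<open>b < N\<close> unfolding singly_occupied_def by blast
    moreover have "mode b \<tau> \<notin> S"
      using hop by auto
    ultimately have "\<rho>\<^sub>0 \<noteq> \<tau>"
      by blast
    have "mode b \<rho>\<^sub>0 \<in> Q"
      using \<open>mode b \<rho>\<^sub>0 \<in> S\<close> hop by auto
    moreover have "\<rho> = \<tau> \<or> \<rho> = \<rho>\<^sub>0"
      using \<open>\<rho>\<^sub>0 \<noteq> \<tau>\<close> by blast
    ultimately show ?thesis
      using hop by auto
  qed
  show ?thesis
    using that hop a_empty b_double by blast
qed

lemma hops_relcomp_common_sites:
  assumes S: "singly_occupied N S" and S': "singly_occupied N S'" and "e \<subseteq> {..<N}"
    and "(S, S') \<in> hops e O hops e'"
  shows "\<exists>a b. a \<noteq> b \<and> {a, b} \<subseteq> e \<inter> e'"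
proof -
  obtain R where "(S, R) \<in> hops e" "(R, S') \<in> hops e'"
    using assms(4) by blast
  obtain a b where first: "a \<in> e" "b \<in> e" "a \<noteq> b"
    and a_empty: "\<And>\<rho>. mode a \<rho> \<notin> R" and b_double: "\<And>\<rho>. mode b \<rho> \<in> R"
    using hop_from_singly_occupied[OF S \<open>e \<subseteq> {..<N}\<close> \<open>(S, R) \<in> hops e\<close>] by blast
  obtain a' b' \<sigma> Q' where second: "R = insert (mode a' \<sigma>) Q'" "S' = insert (mode b' \<sigma>) Q'"
    "a' \<in> e'" "b' \<in> e'"
    using \<open>(R, S') \<in> hops e'\<close> unfolding hops_def by blast
  have "a < N" "b < N"
    using first \<open>e \<subseteq> {..<N}\<close> by auto
  obtain \<rho> where "mode a \<rho> \<in> S'"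
    using S' \<open>a < N\<close> unfolding singly_occupied_def by blast
  then have "a = b'"
    using a_empty second by (metis insert_iff mode_eq_iff)
  obtain \<rho> where "mode b \<rho> \<notin> S'"
    using S' \<open>b < N\<close> unfolding singly_occupied_def by (metis (full_types))
  then have "b = a'"
    using b_double second by (metis insert_iff mode_eq_iff)
  show ?thesis
    using first second \<open>a = b'\<close> \<open>b = a'\<close> by blast
qed

lemma bond_eq_if_contains:
  assumes "e \<in> bonds d L" "a \<noteq> b" "{a, b} \<subseteq> e"
  shows "e = {a, b}"
  using assms unfolding bonds_def nn_def by auto

lemma bond_subset_sites: "e \<in> bonds d L \<Longrightarrow> e \<subseteq> {..<L ^ d}"
  unfolding bonds_def nn_def sites_def by auto

lemma hops_relcomp_singly_occupied_same_bond:
  assumes "e \<in> bonds d L" "e' \<in> bonds d L"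
    and "singly_occupied (L ^ d) S" "singly_occupied (L ^ d) S'"
    and "(S, S') \<in> hops e O hops e'"
  shows "e = e'"
proof -
  obtain a b where "a \<noteq> b" "{a, b} \<subseteq> e" "{a, b} \<subseteq> e'"
    using hops_relcomp_common_sites[OF assms(3,4) bond_subset_sites[OF assms(1)] assms(5)] by blast
  then show ?thesis
    using bond_eq_if_contains assms(1,2) by metis
qed

theorem lemmaB1:
  fixes d L :: nat and t h0 U h :: real and e e' :: "nat set"
  assumes "even L" and "L \<ge> 2"
    and "h0 > 0" and "U > 2 * h0" and "\<bar>h\<bar> \<le> h0"
    and "e \<in> bonds d L" and "e' \<in> bonds d L" and "e \<noteq> e'"
  shows "\<forall>S\<in>hf d L. \<forall>S'\<in>hf d L.
    mmult (fock d L)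
      (mmult (fock d L) (Pm d L 0)
         (grade d L 0 (ad d L (Ioff d L h U (Tb d L t e)) (offp d L (Tb d L t e')))))
      (Pm d L 0) S S' = 0"
proof (intro ballI)
  fix S S' assume "S \<in> hf d L" "S' \<in> hf d L"
  let ?C = "ad d L (Ioff d L h U (Tb d L t e)) (offp d L (Tb d L t e'))"
  have "(S, S') \<notin> supp ?C" if "Dop d L S S = 0" "Dop d L S' S' = 0"
  proof
    assume "(S, S') \<in> supp ?C"
    then have "(S, S') \<in> hops e O hops e' \<union> hops e' O hops e"
      using supp_ad_Ioff_offp[of d L h U "Tb d L t e" "Tb d L t e'"] supp_Tb[of d L t e] supp_Tb[of d L t e']
      by blast
    moreover have "singly_occupied (L ^ d) S" "singly_occupied (L ^ d) S'"
      using that singly_occupied_if_Dop_eq_0 \<open>S \<in> hf d L\<close> \<open>S' \<in> hf d L\<close> by blast+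
    ultimately show False
      using hops_relcomp_singly_occupied_same_bond assms(6-8) by blast
  qed
  then have "(S, S') \<notin> supp (mmult (fock d L) (mmult (fock d L) (Pm d L 0) (grade d L 0 ?C)) (Pm d L 0))"
    using supp_Pm_sandwich[of "fock d L" d L 0 "grade d L 0 ?C" 0] supp_grade[of d L 0 ?C]
    unfolding subset_iff by force
  then show "mmult (fock d L) (mmult (fock d L) (Pm d L 0) (grade d L 0 ?C)) (Pm d L 0) S S' = 0"
    unfolding supp_def by simp
qed

end
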